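(* Let $(\Sigma_+,\Sigma_-,N_1,N_2,N_3)$ be a solution of the Wainwright–Hsu system satisfying the constraint, with $N_1<0$ and $N_2,N_3>0$. Then for every $\epsilon>0$ there is $T$ such that $\Sigma_+(\tau)\leq\frac12+\epsilon$ for all $\tau\geq T$.
   Context: Wainwright–Hsu system: for functions $N_1,N_2,N_3,\Sigma_+,\Sigma_-$ of $\tau\in\mathbb{R}$ (prime denotes $d/d\tau$), $N_1'=(q-4\Sigma_+)N_1$, $N_2'=(q+2\Sigma_++2\sqrt3\Sigma_-)N_2$, $N_3'=(q+2\Sigma_+-2\sqrt3\Sigma_-)N_3$, $\Sigma_+'=-(2-q)\Sigma_+-3S_+$, $\Sigma_-'=-(2-q)\Sigma_--3S_-$, where $q=2(\Sigma_+^2+\Sigma_-^2)$, $S_+=\frac12[(N_2-N_3)^2-N_1(2N_1-N_2-N_3)]$, $S_-=\frac{\sqrt3}{2}(N_3-N_2)(N_1-N_2-N_3)$, together with the constraint $\Sigma_+^2+\Sigma_-^2+\frac34[N_1^2+N_2^2+N_3^2-2(N_1N_2+N_2N_3+N_1N_3)]=1$. Solutions with these sign conditions exist for all $\tau\in\mathbb{R}$. *)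

theory Defs
  imports "HOL-Analysis.Analysis"
begin

definition wh_q :: "real \<Rightarrow> real \<Rightarrow> real" where
  "wh_q sp sm = 2 * (sp^2 + sm^2)"

definition wh_Sp :: "real \<Rightarrow> real \<Rightarrow> real \<Rightarrow> real" where
  "wh_Sp n1 n2 n3 = (1/2) * ((n2 - n3)^2 - n1 * (2*n1 - n2 - n3))"

definition wh_Sm :: "real \<Rightarrow> real \<Rightarrow> real \<Rightarrow> real" where
  "wh_Sm n1 n2 n3 = (sqrt 3 / 2) * (n3 - n2) * (n1 - n2 - n3)"

definition wh_solution ::
  "(real \<Rightarrow> real) \<Rightarrow> (real \<Rightarrow> real) \<Rightarrow> (real \<Rightarrow> real) \<Rightarrow> (real \<Rightarrow> real) \<Rightarrow> (real \<Rightarrow> real) \<Rightarrow> bool"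
where
  "wh_solution N1 N2 N3 Sp Sm \<longleftrightarrow>
    (\<forall>t. (N1 has_real_derivative ((wh_q (Sp t) (Sm t) - 4 * Sp t) * N1 t)) (at t) \<and>
         (N2 has_real_derivative ((wh_q (Sp t) (Sm t) + 2 * Sp t + 2 * sqrt 3 * Sm t) * N2 t)) (at t) \<and>
         (N3 has_real_derivative ((wh_q (Sp t) (Sm t) + 2 * Sp t - 2 * sqrt 3 * Sm t) * N3 t)) (at t) \<and>
         (Sp has_real_derivative (- (2 - wh_q (Sp t) (Sm t)) * Sp t - 3 * wh_Sp (N1 t) (N2 t) (N3 t))) (at t) \<and>
         (Sm has_real_derivative (- (2 - wh_q (Sp t) (Sm t)) * Sm t - 3 * wh_Sm (N1 t) (N2 t) (N3 t))) (at t) \<and>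
         (Sp t)^2 + (Sm t)^2 + (3/4) * ((N1 t)^2 + (N2 t)^2 + (N3 t)^2
            - 2 * (N1 t * N2 t + N2 t * N3 t + N1 t * N3 t)) = 1)"

end

theory Submission
  imports Defs
begin

(* The product |N1 N2 N3| satisfies (ln |N1 N2 N3|)' = 3 q >= 0, and q >= 1/2 wherever Sp >= 1/2.
   Since Sp' is bounded, each time Sp exceeds 1/2 + e it has been above 1/2 for a time of order e;
   if this happens at arbitrarily late times, |N1 N2 N3| therefore tends to infinity. The constraint
   bounds N1^2 N2 N3, so then eventually -N1 <= (e/2) (N2 + N3), and from that point on Sp' < 0
   wherever Sp >= 1/2 + e: Sp can no longer cross 1/2 + e upwards. It does get below 1/2 + e,
   since otherwise N1^2 N2 N3 would be nondecreasing and Sp' <= -6 e N1^2 N2 N3 would push Sp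
   below -1. *)

lemma DERIV_mult_rates:
  fixes f g :: "'a::real_normed_field \<Rightarrow> 'a"
  assumes "(f has_field_derivative a * f x) (at x)" and "(g has_field_derivative b * g x) (at x)"
  shows "((\<lambda>x. f x * g x) has_field_derivative (a + b) * (f x * g x)) (at x)"
  by (rule DERIV_cong[OF DERIV_mult[OF assms]]) (simp add: algebra_simps)

lemma DERIV_ge_imp_diff_ge:
  fixes f f' :: "real \<Rightarrow> real"
  assumes "a \<le> b"
    and "\<And>t. a \<le> t \<Longrightarrow> t \<le> b \<Longrightarrow> (f has_real_derivative f' t) (at t)"
    and "\<And>t. a \<le> t \<Longrightarrow> t \<le> b \<Longrightarrow> k \<le> f' t"
  shows "k * (b - a) \<le> f b - f a"
proof (cases "a = b")
  case False
  with assms obtain z where "a < z" "z < b" "f b - f a = (b - a) * f' z"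
    using MVT2[of a b f f'] by force
  with assms show ?thesis by (simp add: mult.commute mult_left_mono)
qed simp

lemma DERIV_le_imp_diff_le:
  fixes f f' :: "real \<Rightarrow> real"
  assumes "a \<le> b"
    and "\<And>t. a \<le> t \<Longrightarrow> t \<le> b \<Longrightarrow> (f has_real_derivative f' t) (at t)"
    and "\<And>t. a \<le> t \<Longrightarrow> t \<le> b \<Longrightarrow> f' t \<le> k"
  shows "f b - f a \<le> k * (b - a)"
proof -
  have "(- k) * (b - a) \<le> (- f b) - (- f a)"
    by (rule DERIV_ge_imp_diff_ge[where f' = "\<lambda>t. - f' t"]) (use assms in \<open>auto intro: DERIV_minus\<close>)
  then show ?thesis by simp
qed

lemma DERIV_neg_above_imp_stays_below:
  fixes g g' :: "real \<Rightarrow> real"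
  assumes der: "\<And>t. (g has_real_derivative g' t) (at t)"
    and neg: "\<And>t. T \<le> t \<Longrightarrow> c \<le> g t \<Longrightarrow> g' t < 0"
    and t0: "T \<le> t0" "g t0 \<le> c" and "t0 \<le> t"
  shows "g t \<le> c"
proof (rule ccontr)
  assume above: "\<not> g t \<le> c"
  define S where "S = {t0..t} \<inter> {x. g x \<le> c}"
  have "continuous_on UNIV g"
    using der by (meson DERIV_isCont continuous_at_imp_continuous_on)
  then have "closed {x. g x \<le> c}"
    by (intro closed_Collect_le) auto
  then have "compact S" unfolding S_def by (intro compact_Int_closed) auto
  moreover have "t0 \<in> S" using t0 \<open>t0 \<le> t\<close> unfolding S_def by auto
  ultimately obtain s where s: "s \<in> S" "\<forall>x\<in>S. x \<le> s"
    using compact_attains_sup by blast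
  have "s < t" using s above unfolding S_def by (auto simp: less_le)
  then obtain z where z: "s < z" "z < t" "g t - g s = (t - s) * g' z"
    using MVT2[of s t g g'] der by blast
  have "z \<notin> S" using s z by auto
  then have "c < g z" using s z unfolding S_def by auto
  then have "g' z < 0" using neg s z t0 unfolding S_def by auto
  then have "(t - s) * g' z < 0" using z by (simp add: mult_pos_neg)
  moreover have "g s \<le> c" using s unfolding S_def by auto
  ultimately show False using z above by linarith
qed

lemma filterlim_at_top_if_recurrent_increments:
  fixes f :: "real \<Rightarrow> real"
  assumes mono: "mono f" and "0 < \<delta>"
    and recurrent: "\<And>T. \<exists>\<tau>\<ge>T. f (\<tau> - h) + \<delta> \<le> f \<tau>"
  shows "filterlim f at_top at_top"
proof -
  have reach: "\<exists>t. f 0 + real n * \<delta> \<le> f t" for n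
  proof (induction n)
    case (Suc n)
    then obtain t where t: "f 0 + real n * \<delta> \<le> f t" by blast
    obtain \<tau> where \<tau>: "t + h \<le> \<tau>" "f (\<tau> - h) + \<delta> \<le> f \<tau>"
      using recurrent by blast
    have "f t \<le> f (\<tau> - h)" using \<tau>(1) mono by (simp add: monoD)
    with t \<tau>(2) show ?case by (intro exI[of _ \<tau>]) (simp add: algebra_simps)
  qed auto
  show ?thesis
    unfolding filterlim_at_top eventually_at_top_linorder
  proof
    fix M
    obtain n where "M - f 0 < real n * \<delta>"
      using reals_Archimedean3[OF \<open>0 < \<delta>\<close>] by blast
    moreover obtain t where "f 0 + real n * \<delta> \<le> f t" using reach by blast
    ultimately have "M \<le> f t" by linarith
    then show "\<exists>t. \<forall>s\<ge>t. M \<le> f s"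
      using mono by (meson monoD order.trans)
  qed
qed

lemma four_sq_mult_le_sq_mult_add:
  fixes n1 n2 n3 :: real
  shows "4 * (n1^2 * n2 * n3) \<le> ((- n1) * (n2 + n3))^2"
proof -
  have "4 * (n2 * n3) \<le> (n2 + n3)^2"
    using zero_le_power2[of "n2 - n3"] by (simp add: power2_eq_square algebra_simps)
  then have "n1^2 * (4 * (n2 * n3)) \<le> n1^2 * (n2 + n3)^2"
    by (simp add: mult_left_mono)
  moreover have "((- n1) * (n2 + n3))^2 = n1^2 * (n2 + n3)^2"
    by (simp add: power_mult_distrib)
  ultimately show ?thesis by simp
qed

definition wh_constraint :: "real \<Rightarrow> real \<Rightarrow> real \<Rightarrow> real \<Rightarrow> real \<Rightarrow> bool" where
  "wh_constraint sp sm n1 n2 n3 \<longleftrightarrow>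
    sp^2 + sm^2 + (3/4) * (n1^2 + n2^2 + n3^2 - 2 * (n1 * n2 + n2 * n3 + n1 * n3)) = 1"

definition wh_Sp_field :: "real \<Rightarrow> real \<Rightarrow> real \<Rightarrow> real \<Rightarrow> real \<Rightarrow> real" where
  "wh_Sp_field sp sm n1 n2 n3 = - (2 - wh_q sp sm) * sp - 3 * wh_Sp n1 n2 n3"

context
  fixes sp sm n1 n2 n3 :: real
  assumes constraint: "wh_constraint sp sm n1 n2 n3"
    and signs: "n1 \<le> 0" "0 \<le> n2" "0 \<le> n3"
begin

lemma wh_constraint_split:
  "sp^2 + sm^2 + (3/4) * (n2 - n3)^2 + (3/4) * n1^2 + (3/2) * ((- n1) * (n2 + n3)) = 1"
  using constraint unfolding wh_constraint_def by (simp add: power2_eq_square algebra_simps)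

lemma wh_sum_sq_Sigma_le_1: "sp^2 + sm^2 \<le> 1"
proof -
  have "0 \<le> (- n1) * (n2 + n3)" using signs by (simp add: mult_nonpos_nonneg)
  then show ?thesis
    using wh_constraint_split zero_le_power2[of "n2 - n3"] zero_le_power2[of n1] by linarith
qed

lemma wh_abs_Sp_le_1: "\<bar>sp\<bar> \<le> 1"
proof -
  have "sp^2 \<le> 1" using wh_sum_sq_Sigma_le_1 zero_le_power2[of sm] by linarith
  then show ?thesis by (simp add: abs_square_le_1)
qed

lemma wh_mixed_term_le: "(- n1) * (n2 + n3) \<le> 2/3"
  using wh_constraint_split zero_le_power2[of sp] zero_le_power2[of sm]
    zero_le_power2[of "n2 - n3"] zero_le_power2[of n1]
  by linarith

lemma wh_six_sq_mult_le_mixed_term: "6 * (n1^2 * n2 * n3) \<le> (- n1) * (n2 + n3)"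
proof -
  have "((- n1) * (n2 + n3))^2 \<le> (2/3) * ((- n1) * (n2 + n3))"
    unfolding power2_eq_square using wh_mixed_term_le signs
    by (intro mult_right_mono) (auto simp: mult_nonpos_nonneg)
  then show ?thesis using four_sq_mult_le_sq_mult_add[of n1 n2 n3] by linarith
qed

lemma wh_sq_mult_le: "n1^2 * n2 * n3 \<le> 1/9"
  using wh_six_sq_mult_le_mixed_term wh_mixed_term_le by linarith

lemma wh_Sp_field_eq:
  "wh_Sp_field sp sm n1 n2 n3 =
    - (3/2) * ((1 + sp) * (n2 - n3)^2 - (2 - sp) * n1^2 + (2 * sp - 1) * ((- n1) * (n2 + n3)))"
proof -
  have q: "wh_q sp sm = 2 - (3/2) * (n2 - n3)^2 - (3/2) * n1^2 - 3 * ((- n1) * (n2 + n3))"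
    using wh_constraint_split unfolding wh_q_def by (simp add: algebra_simps)
  show ?thesis
    unfolding wh_Sp_field_def q wh_Sp_def by (simp add: power2_eq_square algebra_simps)
qed

lemma wh_abs_Sp_field_le: "\<bar>wh_Sp_field sp sm n1 n2 n3\<bar> \<le> 6"
proof -
  have "\<bar>2 - wh_q sp sm\<bar> \<le> 2"
    using wh_sum_sq_Sigma_le_1 unfolding wh_q_def by simp
  then have "\<bar>(2 - wh_q sp sm) * sp\<bar> \<le> 2 * 1"
    unfolding abs_mult using wh_abs_Sp_le_1 by (intro mult_mono) auto
  moreover have "\<bar>wh_Sp n1 n2 n3\<bar> \<le> 4/3"
  proof -
    define A B C where "A = (- n1) * (n2 + n3)" and "B = (n2 - n3)^2" and "C = n1^2"
    have "wh_Sp n1 n2 n3 = (B - 2 * C - A) / 2"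
      unfolding A_def B_def C_def by (simp add: wh_Sp_def power2_eq_square algebra_simps)
    moreover have "0 \<le> A" "0 \<le> B" "0 \<le> C"
      using signs unfolding A_def B_def C_def by (simp_all add: mult_nonpos_nonneg)
    moreover have "sp^2 + sm^2 + (3/4) * B + (3/4) * C + (3/2) * A = 1"
      using wh_constraint_split unfolding A_def B_def C_def .
    ultimately show ?thesis
      using zero_le_power2[of sp] zero_le_power2[of sm] by argo
  qed
  ultimately show ?thesis
    unfolding wh_Sp_field_def minus_mult_left[symmetric] by argo
qed

lemma wh_Sp_field_le_neg:
  assumes e: "0 < e" "1/2 + e \<le> sp" and small: "- n1 \<le> (e/2) * (n2 + n3)"
  shows "wh_Sp_field sp sm n1 n2 n3 \<le> - (e * ((- n1) * (n2 + n3)))"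
proof -
  define A where "A = (- n1) * (n2 + n3)"
  have "0 \<le> A" using signs unfolding A_def by (simp add: mult_nonpos_nonneg)
  have "n1^2 = (- n1) * (- n1)" by (simp add: power2_eq_square)
  also have "\<dots> \<le> (- n1) * ((e/2) * (n2 + n3))"
    using small signs by (intro mult_left_mono) auto
  also have "\<dots> = (1/2) * (e * A)" unfolding A_def by simp
  finally have "n1^2 \<le> (1/2) * (e * A)" .
  moreover have "(2 - sp) * n1^2 \<le> (3/2) * n1^2"
    using e by (intro mult_right_mono) auto
  moreover have "(2 * e) * A \<le> (2 * sp - 1) * A"
    using e \<open>0 \<le> A\<close> by (intro mult_right_mono) auto
  moreover have "0 \<le> (1 + sp) * (n2 - n3)^2"
    using wh_abs_Sp_le_1 by simp
  moreover have "0 \<le> e * A" using e \<open>0 \<le> A\<close> by simp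
  ultimately show ?thesis
    unfolding wh_Sp_field_eq A_def[symmetric] by (simp add: algebra_simps)
qed

lemma wh_neg_mult_sq_prod_le_add: "(- n1) * (n1 * n2 * n3)^2 \<le> n2 + n3"
proof (rule power2_le_imp_le)
  have "n2 * n3 \<le> (n2 + n3)^2"
    using zero_le_power2[of "n2 - n3"] signs by (simp add: power2_eq_square algebra_simps)
  moreover have "(n1^2 * n2 * n3)^3 \<le> 1"
    using wh_sq_mult_le signs by (simp add: power_le_one)
  moreover have "0 \<le> n2 * n3" using signs by simp
  ultimately have "(n1^2 * n2 * n3)^3 * (n2 * n3) \<le> 1 * (n2 + n3)^2"
    by (intro mult_mono) auto
  moreover have "((- n1) * (n1 * n2 * n3)^2)^2 = (n1^2 * n2 * n3)^3 * (n2 * n3)"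
    by (simp add: power2_eq_square power3_eq_cube algebra_simps)
  ultimately show "((- n1) * (n1 * n2 * n3)^2)^2 \<le> (n2 + n3)^2" by simp
  show "0 \<le> n2 + n3" using signs by simp
qed

end

locale wh_bianchi_VIII =
  fixes N1 N2 N3 Sp Sm :: "real \<Rightarrow> real"
  assumes solution: "wh_solution N1 N2 N3 Sp Sm"
    and signs: "\<forall>t. N1 t < 0 \<and> N2 t > 0 \<and> N3 t > 0"
begin

abbreviation q :: "real \<Rightarrow> real" where
  "q t \<equiv> wh_q (Sp t) (Sm t)"

lemma N_signs_strict: "N1 t < 0" "0 < N2 t" "0 < N3 t"
  using signs by blast+

lemma N_signs: "N1 t \<le> 0" "0 \<le> N2 t" "0 \<le> N3 t"
  using N_signs_strict less_imp_le by blast+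

lemma constraint: "wh_constraint (Sp t) (Sm t) (N1 t) (N2 t) (N3 t)"
  using solution unfolding wh_solution_def wh_constraint_def by blast

lemma N1_deriv: "(N1 has_real_derivative (q t - 4 * Sp t) * N1 t) (at t)"
  and N2_deriv: "(N2 has_real_derivative (q t + 2 * Sp t + 2 * sqrt 3 * Sm t) * N2 t) (at t)"
  and N3_deriv: "(N3 has_real_derivative (q t + 2 * Sp t - 2 * sqrt 3 * Sm t) * N3 t) (at t)"
  and Sp_deriv: "(Sp has_real_derivative wh_Sp_field (Sp t) (Sm t) (N1 t) (N2 t) (N3 t)) (at t)"
  using solution unfolding wh_solution_def wh_Sp_field_def by blast+

lemma mixed_term_pos: "0 < (- N1 t) * (N2 t + N3 t)"
proof -
  have "0 < N2 t + N3 t" by (intro add_pos_pos N_signs_strict)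
  then show ?thesis using N_signs_strict(1) by (simp add: mult_neg_pos)
qed

definition abs_N123 :: "real \<Rightarrow> real" where
  "abs_N123 t = - (N1 t * N2 t * N3 t)"

definition N1_sq_N23 :: "real \<Rightarrow> real" where
  "N1_sq_N23 t = (N1 t)^2 * N2 t * N3 t"

lemma abs_N123_pos: "0 < abs_N123 t"
  using signs unfolding abs_N123_def by (simp add: mult_neg_pos)

lemma abs_N123_deriv: "(abs_N123 has_real_derivative 3 * q t * abs_N123 t) (at t)"
proof -
  have "((\<lambda>t. N1 t * N2 t * N3 t) has_real_derivative
      ((q t - 4 * Sp t) + (q t + 2 * Sp t + 2 * sqrt 3 * Sm t) + (q t + 2 * Sp t - 2 * sqrt 3 * Sm t))
        * (N1 t * N2 t * N3 t)) (at t)"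
    by (intro DERIV_mult_rates N1_deriv N2_deriv N3_deriv)
  from DERIV_minus[OF this] show ?thesis
    unfolding abs_N123_def[abs_def] by (rule DERIV_cong) (simp add: algebra_simps)
qed

lemma N1_sq_N23_deriv: "(N1_sq_N23 has_real_derivative 4 * (q t - Sp t) * N1_sq_N23 t) (at t)"
proof -
  have "((\<lambda>t. N1 t * N1 t * N2 t * N3 t) has_real_derivative
      ((q t - 4 * Sp t) + (q t - 4 * Sp t) + (q t + 2 * Sp t + 2 * sqrt 3 * Sm t)
        + (q t + 2 * Sp t - 2 * sqrt 3 * Sm t)) * (N1 t * N1 t * N2 t * N3 t)) (at t)"
    by (intro DERIV_mult_rates N1_deriv N2_deriv N3_deriv)
  then show ?thesis
    unfolding N1_sq_N23_def[abs_def] power2_eq_square by (rule DERIV_cong) (simp add: algebra_simps)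
qed

lemma ln_abs_N123_deriv: "((\<lambda>t. ln (abs_N123 t)) has_real_derivative 3 * q t) (at t)"
proof -
  have "((\<lambda>t. ln (abs_N123 t)) has_real_derivative 3 * q t * abs_N123 t / abs_N123 t) (at t)"
    using abs_N123_deriv abs_N123_pos by (auto intro!: derivative_eq_intros)
  then show ?thesis using abs_N123_pos[of t] by simp
qed

lemma mono_ln_abs_N123: "mono (\<lambda>t. ln (abs_N123 t))"
proof (rule monoI)
  fix a b :: real assume "a \<le> b"
  then show "ln (abs_N123 a) \<le> ln (abs_N123 b)"
  proof (rule DERIV_nonneg_imp_nondecreasing)
    fix t
    have "0 \<le> 3 * q t" unfolding wh_q_def by simp
    then show "\<exists>y. ((\<lambda>t. ln (abs_N123 t)) has_real_derivative y) (at t) \<and> 0 \<le> y"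
      using ln_abs_N123_deriv by blast
  qed
qed

lemma ln_abs_N123_gain:
  assumes "0 < e" and "1/2 + e < Sp \<tau>"
  shows "ln (abs_N123 (\<tau> - e/6)) + e/4 \<le> ln (abs_N123 \<tau>)"
proof -
  have rate: "3/2 \<le> 3 * q t" if "\<tau> - e/6 \<le> t" "t \<le> \<tau>" for t
  proof -
    have "Sp \<tau> - Sp t \<le> 6 * (\<tau> - t)"
      using wh_abs_Sp_field_le[OF constraint N_signs]
      by (intro DERIV_le_imp_diff_le[OF that(2) Sp_deriv]) (simp add: abs_le_iff)
    then have "1/2 \<le> Sp t" using that assms by argo
    then have "(1/2)^2 \<le> (Sp t)^2" by (intro power_mono) auto
    then have "1/4 \<le> (Sp t)^2" by (simp add: power_divide)
    then show ?thesis unfolding wh_q_def using zero_le_power2[of "Sm t"] by argo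
  qed
  have "3/2 * (\<tau> - (\<tau> - e/6)) \<le> ln (abs_N123 \<tau>) - ln (abs_N123 (\<tau> - e/6))"
    using assms(1) rate by (intro DERIV_ge_imp_diff_ge[OF _ ln_abs_N123_deriv]) auto
  then show ?thesis by simp
qed

lemma abs_N123_at_top:
  assumes "0 < e" and often: "\<forall>T. \<exists>\<tau>\<ge>T. 1/2 + e < Sp \<tau>"
  shows "filterlim abs_N123 at_top at_top"
proof -
  have "filterlim (\<lambda>t. ln (abs_N123 t)) at_top at_top"
  proof (rule filterlim_at_top_if_recurrent_increments[OF mono_ln_abs_N123])
    show "0 < e/4" using assms by simp
    show "\<exists>\<tau>\<ge>T. ln (abs_N123 (\<tau> - e/6)) + e/4 \<le> ln (abs_N123 \<tau>)" for T
      using often ln_abs_N123_gain[OF \<open>0 < e\<close>] by blast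
  qed
  then have "filterlim (\<lambda>t. exp (ln (abs_N123 t))) at_top at_top"
    by (rule filterlim_compose[OF exp_at_top])
  then show ?thesis using abs_N123_pos by simp
qed

lemma eventually_N1_small:
  assumes "filterlim abs_N123 at_top at_top" and "0 < d"
  shows "eventually (\<lambda>t. - N1 t \<le> d * (N2 t + N3 t)) at_top"
  using assms(1) unfolding filterlim_at_top
proof (rule eventually_mono[OF spec[of _ "max 1 (1/d)"]])
  fix t assume large: "max 1 (1/d) \<le> abs_N123 t"
  have "- N1 t * (1/d) \<le> - N1 t * abs_N123 t"
    using large N_signs by (intro mult_left_mono) auto
  also have "\<dots> \<le> - N1 t * (abs_N123 t)^2"
    using large N_signs by (intro mult_left_mono) (auto simp: power2_eq_square)
  also have "\<dots> \<le> N2 t + N3 t"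
    using wh_neg_mult_sq_prod_le_add[OF constraint N_signs] unfolding abs_N123_def by simp
  finally show "- N1 t \<le> d * (N2 t + N3 t)"
    using \<open>0 < d\<close> by (simp add: field_simps)
qed

lemma Sp_field_neg_above:
  assumes "0 < e" and "1/2 + e \<le> Sp t" and "- N1 t \<le> e/2 * (N2 t + N3 t)"
  shows "wh_Sp_field (Sp t) (Sm t) (N1 t) (N2 t) (N3 t) < 0"
proof -
  have "0 < e * ((- N1 t) * (N2 t + N3 t))"
    by (rule mult_pos_pos[OF \<open>0 < e\<close> mixed_term_pos])
  then show ?thesis using wh_Sp_field_le_neg[OF constraint N_signs assms] by linarith
qed

lemma Sp_reaches_below:
  assumes "0 < e" and small: "\<forall>t\<ge>T. - N1 t \<le> e/2 * (N2 t + N3 t)"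
  shows "\<exists>\<tau>\<ge>T. Sp \<tau> \<le> 1/2 + e"
proof (rule ccontr)
  assume "\<not> ?thesis"
  then have above: "1/2 + e \<le> Sp t" if "T \<le> t" for t
    using that by force
  have N1_sq_N23_mono: "N1_sq_N23 T \<le> N1_sq_N23 t" if "T \<le> t" for t
  proof (rule DERIV_nonneg_imp_nondecreasing[OF that])
    fix x assume "T \<le> x"
    then have "0 \<le> Sp x * (2 * Sp x - 1)" using above[of x] assms by simp
    then have "Sp x \<le> 2 * (Sp x)^2" by (simp add: power2_eq_square algebra_simps)
    then have "0 \<le> q x - Sp x" unfolding wh_q_def using zero_le_power2[of "Sm x"] by argo
    moreover have "0 \<le> N1_sq_N23 x" using N_signs unfolding N1_sq_N23_def by simp
    ultimately have "0 \<le> 4 * (q x - Sp x) * N1_sq_N23 x" by simp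
    then show "\<exists>y. (N1_sq_N23 has_real_derivative y) (at x) \<and> 0 \<le> y"
      using N1_sq_N23_deriv by blast
  qed
  define k where "k = e * (6 * N1_sq_N23 T)"
  have "0 < N1_sq_N23 T" using N_signs_strict[of T] unfolding N1_sq_N23_def by simp
  then have "0 < k" unfolding k_def using assms(1) by simp
  have slope: "wh_Sp_field (Sp t) (Sm t) (N1 t) (N2 t) (N3 t) \<le> - k" if "T \<le> t" for t
  proof -
    have "6 * N1_sq_N23 T \<le> (- N1 t) * (N2 t + N3 t)"
      using N1_sq_N23_mono[OF that] wh_six_sq_mult_le_mixed_term[OF constraint N_signs, of t]
      unfolding N1_sq_N23_def by linarith
    then have "k \<le> e * ((- N1 t) * (N2 t + N3 t))"
      unfolding k_def using assms(1) by (intro mult_left_mono) auto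
    then show ?thesis
      using wh_Sp_field_le_neg[OF constraint N_signs assms(1) above[OF that]] small that by force
  qed
  have "Sp (T + 3/k) - Sp T \<le> - k * (T + 3/k - T)"
    using \<open>0 < k\<close> slope by (intro DERIV_le_imp_diff_le[OF _ Sp_deriv]) auto
  then have "Sp (T + 3/k) \<le> Sp T - 3" using \<open>0 < k\<close> by simp
  then show False
    using wh_abs_Sp_le_1[OF constraint N_signs, of T] wh_abs_Sp_le_1[OF constraint N_signs, of "T + 3/k"]
    by (simp add: abs_le_iff)
qed

lemma Sp_eventually_le:
  assumes "0 < e"
  shows "eventually (\<lambda>t. Sp t \<le> 1/2 + e) at_top"
proof (rule ccontr)
  assume "\<not> ?thesis"
  then have often: "\<forall>T. \<exists>\<tau>\<ge>T. 1/2 + e < Sp \<tau>"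
    by (simp add: eventually_at_top_linorder not_le)
  have "eventually (\<lambda>t. - N1 t \<le> e/2 * (N2 t + N3 t)) at_top"
    using eventually_N1_small[OF abs_N123_at_top[OF assms often], of "e/2"] assms by simp
  then obtain T where small: "\<forall>t\<ge>T. - N1 t \<le> e/2 * (N2 t + N3 t)"
    unfolding eventually_at_top_linorder by blast
  obtain \<tau>0 where \<tau>0: "T \<le> \<tau>0" "Sp \<tau>0 \<le> 1/2 + e"
    using Sp_reaches_below[OF assms small] by blast
  have "Sp t \<le> 1/2 + e" if "\<tau>0 \<le> t" for t
    using DERIV_neg_above_imp_stays_below[OF Sp_deriv _ \<tau>0 that] Sp_field_neg_above[OF assms] small
    by blast
  then show False using often by force
qed

end

theorem mainTheorem14:
  fixes N1 N2 N3 Sp Sm :: "real \<Rightarrow> real"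
  assumes "wh_solution N1 N2 N3 Sp Sm"
    and "\<forall>t. N1 t < 0 \<and> N2 t > 0 \<and> N3 t > 0"
  shows "\<forall>\<epsilon>>0. \<exists>T. \<forall>\<tau>\<ge>T. Sp \<tau> \<le> 1/2 + \<epsilon>"
proof -
  interpret wh_bianchi_VIII N1 N2 N3 Sp Sm
    using assms by unfold_locales
  show ?thesis
    using Sp_eventually_le unfolding eventually_at_top_linorder by blast
qed

end
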